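(* Let $\mathbf a=(a_i)$ and $\mathbf b=(b_i)$ be sequences in $\{0,1\}^{\mathbb N}$ with $a_1=0$ and $b_1=1$. Then: (1) $F(\mathbf a,\mathbf b)=\mathcal K(\sigma(\mathbf b),\sigma(\mathbf a))$; (2) $E(\mathbf a,\mathbf b)\cap[\sigma(\mathbf b),\sigma(\mathbf a)]=F(\mathbf a,\mathbf b)=\mathcal K(\sigma(\mathbf b),\sigma(\mathbf a))$; (3) $h_{top}(\mathcal K(\sigma(\mathbf b),\sigma(\mathbf a)),\sigma)=h_{top}(E(\mathbf a,\mathbf b),\sigma)$.
   Context: $\sigma$ denotes the left shift on $\{0,1\}^{\mathbb N}$ and $\prec,\preceq$ the lexicographic order; $[\mathbf x,\mathbf y]=\{\mathbf z\colon\mathbf x\preceq\mathbf z\preceq\mathbf y\}$. For $\mathbf t,\mathbf u\in\{0,1\}^{\mathbb N}$, $\mathcal K(\mathbf t,\mathbf u)=\{\mathbf x\colon\mathbf t\preceq\sigma^n(\mathbf x)\preceq\mathbf u\ \forall n\ge0\}$. $E(\mathbf a,\mathbf b)=\{\mathbf x\in\{0,1\}^{\mathbb N}\colon\text{for all }n\ge0,\ \sigma^n(\mathbf x)\preceq\mathbf a\text{ or }\mathbf b\preceq\sigma^n(\mathbf x)\}$. $F(\mathbf a,\mathbf b)=\{\mathbf x\in\{0,1\}^{\mathbb N}\colon\text{for all }n\ge0,\ \sigma(\mathbf b)\preceq\sigma^n(\mathbf x)\preceq\mathbf a\text{ or }\mathbf b\preceq\sigma^n(\mathbf x)\preceq\sigma(\mathbf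 a)\}$. $h_{top}$ is topological entropy. *)

theory Defs
  imports Complex_Main
begin

text \<open>Binary sequences indexed from 0: the paper's a_1 is a 0 here.\<close>
type_synonym seq = "nat \<Rightarrow> bool"

definition shift :: "seq \<Rightarrow> seq" where
  "shift x = (\<lambda>i. x (Suc i))"

definition lex_less :: "seq \<Rightarrow> seq \<Rightarrow> bool" where
  "lex_less x y \<longleftrightarrow> (\<exists>n. (\<forall>i<n. x i = y i) \<and> \<not> x n \<and> y n)"

definition lex_le :: "seq \<Rightarrow> seq \<Rightarrow> bool" where
  "lex_le x y \<longleftrightarrow> x = y \<or> lex_less x y"

definition lex_interval :: "seq \<Rightarrow> seq \<Rightarrow> seq set" where
  "lex_interval x y = {z. lex_le x z \<and> lex_le z y}"

definition Kset :: "seq \<Rightarrow> seq \<Rightarrow> seq set" where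
  "Kset t u = {x. \<forall>n. lex_le t ((shift ^^ n) x) \<and> lex_le ((shift ^^ n) x) u}"

definition Eset :: "seq \<Rightarrow> seq \<Rightarrow> seq set" where
  "Eset a b = {x. \<forall>n. lex_le ((shift ^^ n) x) a \<or> lex_le b ((shift ^^ n) x)}"

definition Fset :: "seq \<Rightarrow> seq \<Rightarrow> seq set" where
  "Fset a b = {x. \<forall>n.
     (lex_le (shift b) ((shift ^^ n) x) \<and> lex_le ((shift ^^ n) x) a) \<or>
     (lex_le b ((shift ^^ n) x) \<and> lex_le ((shift ^^ n) x) (shift a))}"

text \<open>Words of length n occurring as prefixes of points of X (for shift-invariant X these
  are exactly the n-blocks occurring in X).\<close>
definition words :: "nat \<Rightarrow> seq set \<Rightarrow> bool list set" where
  "words n X = (\<lambda>x. map x [0..<n]) ` X"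

definition htop :: "seq set \<Rightarrow> real" where
  "htop X = lim (\<lambda>n. ln (real (card (words n X))) / real n)"

end

theory Submission
  imports Defs "HOL-Real_Asymp.Real_Asymp"
begin

text \<open>Since \<open>a\<close> starts with 0 and \<open>b\<close> with 1, we have \<open>a \<preceq> \<sigma>(a)\<close> and \<open>\<sigma>(b) \<preceq> b\<close>, and the
  first symbol of a point \<open>y\<close> of \<open>[\<sigma>(b), \<sigma>(a)]\<close> decides which of the two alternatives
  \<open>y \<preceq> a\<close>, \<open>b \<preceq> y\<close> can hold; comparing \<open>\<sigma>(y)\<close> with \<open>\<sigma>(a)\<close> and \<open>\<sigma>(b)\<close> then shows that
  \<open>[\<sigma>(b), \<sigma>(a)]\<close> is mapped into itself by the shift as long as the orbit avoids the hole
  \<open>(a, b)\<close>. For (3), whenever a point of \<open>E(a, b)\<close> changes its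
  symbol, the shifted point lands in \<open>[\<sigma>(b), \<sigma>(a)]\<close> and hence in \<open>K(\<sigma>(b), \<sigma>(a))\<close>. So every
  point of \<open>E(a, b)\<close> is a constant block followed by a point of \<open>K(\<sigma>(b), \<sigma>(a))\<close>, and the
  number of n-words of \<open>E(a, b)\<close> exceeds that of \<open>K(\<sigma>(b), \<sigma>(a))\<close> by at most a factor
  linear in n, which does not change the exponential growth rate.\<close>

lemma shift_apply: "shift x i = x (Suc i)"
  by (simp add: shift_def)

lemma funpow_shift_apply: "(shift ^^ n) x i = x (n + i)"
  by (induction n arbitrary: i) (auto simp: shift_apply)

lemma seq_eq_iff: "x = y \<longleftrightarrow> x 0 = y 0 \<and> shift x = shift y"
proof
  assume "x 0 = y 0 \<and> shift x = shift y"
  then have "x i = y i" for i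
    by (cases i) (auto simp: shift_apply dest: fun_cong)
  then show "x = y" by auto
qed auto

lemma lex_less_iff:
  "lex_less x y \<longleftrightarrow> \<not> x 0 \<and> y 0 \<or> x 0 = y 0 \<and> lex_less (shift x) (shift y)"
proof
  assume "lex_less x y"
  then obtain n where n: "\<forall>i<n. x i = y i" "\<not> x n" "y n"
    unfolding lex_less_def by blast
  show "\<not> x 0 \<and> y 0 \<or> x 0 = y 0 \<and> lex_less (shift x) (shift y)"
  proof (cases n)
    case (Suc m)
    then have "lex_less (shift x) (shift y)"
      unfolding lex_less_def using n by (intro exI[of _ m]) (auto simp: shift_apply)
    then show ?thesis using n Suc by auto
  qed (use n in auto)
next
  assume "\<not> x 0 \<and> y 0 \<or> x 0 = y 0 \<and> lex_less (shift x) (shift y)"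
  then show "lex_less x y"
  proof
    assume "\<not> x 0 \<and> y 0"
    then show ?thesis unfolding lex_less_def by (intro exI[of _ 0]) auto
  next
    assume head: "x 0 = y 0 \<and> lex_less (shift x) (shift y)"
    then obtain m where m: "\<forall>i<m. x (Suc i) = y (Suc i)" "\<not> x (Suc m)" "y (Suc m)"
      unfolding lex_less_def by (auto simp: shift_apply)
    have "\<forall>i<Suc m. x i = y i"
      using head m by (auto simp: less_Suc_eq_0_disj)
    then show ?thesis unfolding lex_less_def using m by blast
  qed
qed

lemma lex_le_iff:
  "lex_le x y \<longleftrightarrow> \<not> x 0 \<and> y 0 \<or> x 0 = y 0 \<and> lex_le (shift x) (shift y)"
  unfolding lex_le_def using lex_less_iff[of x y] seq_eq_iff[of x y] by auto

lemma lex_le_head_mono: "lex_le x y \<Longrightarrow> x 0 \<Longrightarrow> y 0"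
  using lex_le_iff[of x y] by blast

lemma lex_less_trans: "lex_less x y \<Longrightarrow> lex_less y z \<Longrightarrow> lex_less x z"
proof -
  assume "lex_less x y" "lex_less y z"
  then obtain n m where n: "\<forall>i<n. x i = y i" "\<not> x n" "y n"
    and m: "\<forall>i<m. y i = z i" "\<not> y m" "z m"
    unfolding lex_less_def by blast
  show "lex_less x z"
    unfolding lex_less_def using n m
    by (cases n m rule: linorder_cases) (auto intro!: exI[of _ "min n m"])
qed

lemma lex_le_trans: "lex_le x y \<Longrightarrow> lex_le y z \<Longrightarrow> lex_le x z"
  unfolding lex_le_def using lex_less_trans by blast

lemma lex_le_shift_if_not_head:
  assumes "\<not> y 0"
  shows "lex_le y (shift y)"
proof (cases "\<exists>i. y i")
  case True
  define k where "k = (LEAST i. y i)"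
  have "y k" and "\<forall>i<k. \<not> y i"
    unfolding k_def using LeastI_ex[OF True] not_less_Least by auto
  moreover from \<open>y k\<close> assms have "k > 0" by (cases k) auto
  ultimately have "lex_less y (shift y)"
    unfolding lex_less_def by (intro exI[of _ "k - 1"]) (auto simp: shift_apply)
  then show ?thesis by (simp add: lex_le_def)
qed (simp add: lex_le_def fun_eq_iff shift_apply)

lemma shift_lex_le_if_head:
  assumes "y 0"
  shows "lex_le (shift y) y"
proof (cases "\<exists>i. \<not> y i")
  case True
  define k where "k = (LEAST i. \<not> y i)"
  have "\<not> y k" and "\<forall>i<k. y i"
    unfolding k_def using LeastI_ex[OF True] not_less_Least by auto
  moreover from \<open>\<not> y k\<close> assms have "k > 0" by (cases k) auto
  ultimately have "lex_less (shift y) y"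
    unfolding lex_less_def by (intro exI[of _ "k - 1"]) (auto simp: shift_apply)
  then show ?thesis by (simp add: lex_le_def)
qed (simp add: lex_le_def fun_eq_iff shift_apply)

lemma funpow_shift_mem_Eset:
  assumes "x \<in> Eset a b"
  shows "(shift ^^ n) x \<in> Eset a b"
proof -
  have "(shift ^^ m) ((shift ^^ n) x) = (shift ^^ (m + n)) x" for m
    by (simp add: funpow_add)
  with assms show ?thesis
    unfolding Eset_def by simp
qed

lemma Kset_subset_lex_interval: "Kset t u \<subseteq> lex_interval t u"
  unfolding Kset_def lex_interval_def by (auto dest: spec[of _ 0])

lemma Fset_subset_Eset: "Fset a b \<subseteq> Eset a b"
  unfolding Fset_def Eset_def by blast

lemma Eset_lex_le_or_ge: "x \<in> Eset a b \<Longrightarrow> lex_le x a \<or> lex_le b x"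
  unfolding Eset_def by (auto dest: spec[of _ 0])

context
  fixes a b :: seq
  assumes a_head: "\<not> a 0" and b_head: "b 0"
begin

lemma shift_mem_lex_interval:
  assumes "y \<in> lex_interval (shift b) (shift a)" and "lex_le y a \<or> lex_le b y"
  shows "shift y \<in> lex_interval (shift b) (shift a)"
proof -
  from assms(1) have lo: "lex_le (shift b) y" and hi: "lex_le y (shift a)"
    unfolding lex_interval_def by auto
  show ?thesis
  proof (cases "y 0")
    case False
    with assms(2) b_head have "lex_le y a"
      using lex_le_head_mono[of b y] by blast
    with False a_head have "lex_le (shift y) (shift a)"
      by (simp add: lex_le_iff[of y a])
    moreover have "lex_le (shift b) (shift y)"
      using lex_le_trans[OF lo lex_le_shift_if_not_head[of y, OF False]] .
    ultimately show ?thesis unfolding lex_interval_def by simp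
  next
    case True
    with assms(2) a_head have "lex_le b y"
      using lex_le_head_mono[of y a] by blast
    with True b_head have "lex_le (shift b) (shift y)"
      by (simp add: lex_le_iff[of b y])
    moreover have "lex_le (shift y) (shift a)"
      using lex_le_trans[OF shift_lex_le_if_head[of y, OF True] hi] .
    ultimately show ?thesis unfolding lex_interval_def by simp
  qed
qed

lemma shift_mem_lex_interval_if_switch:
  assumes "lex_le y a \<or> lex_le b y" and "lex_le (shift y) a \<or> lex_le b (shift y)"
    and "y 0 \<noteq> shift y 0"
  shows "shift y \<in> lex_interval (shift b) (shift a)"
proof (cases "y 0")
  case False
  with assms(3) have "shift y 0" by simp
  with assms(2) a_head have "lex_le b (shift y)"
    using lex_le_head_mono[of "shift y" a] by blast
  then have "lex_le (shift b) (shift y)"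
    using lex_le_trans[OF shift_lex_le_if_head[of b, OF b_head]] by blast
  moreover from assms(1) False b_head have "lex_le y a"
    using lex_le_head_mono[of b y] by blast
  with False a_head have "lex_le (shift y) (shift a)"
    by (simp add: lex_le_iff[of y a])
  ultimately show ?thesis unfolding lex_interval_def by simp
next
  case True
  with assms(3) have "\<not> shift y 0" by simp
  with assms(2) b_head have "lex_le (shift y) a"
    using lex_le_head_mono[of b "shift y"] by blast
  then have "lex_le (shift y) (shift a)"
    using lex_le_trans[OF _ lex_le_shift_if_not_head[of a, OF a_head]] by blast
  moreover from assms(1) True a_head have "lex_le b y"
    using lex_le_head_mono[of y a] by blast
  with True b_head have "lex_le (shift b) (shift y)"
    by (simp add: lex_le_iff[of b y])
  ultimately show ?thesis unfolding lex_interval_def by simp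
qed

lemma Fset_eq_Kset: "Fset a b = Kset (shift b) (shift a)"
proof
  have "lex_le a (shift a)" and "lex_le (shift b) b"
    using lex_le_shift_if_not_head[of a, OF a_head] shift_lex_le_if_head[of b, OF b_head] .
  then show "Fset a b \<subseteq> Kset (shift b) (shift a)"
    unfolding Fset_def Kset_def using lex_le_trans by blast
next
  show "Kset (shift b) (shift a) \<subseteq> Fset a b"
  proof
    fix x
    assume "x \<in> Kset (shift b) (shift a)"
    then have K: "lex_le (shift b) ((shift ^^ n) x) \<and> lex_le ((shift ^^ n) x) (shift a)" for n
      unfolding Kset_def by blast
    \<comment> \<open>the bounds on the next orbit point, together with the first symbol, give
      \<open>\<sigma>\<^sup>n(x) \<preceq> a\<close> (first symbol 0) or \<open>b \<preceq> \<sigma>\<^sup>n(x)\<close> (first symbol 1)\<close>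
    have "lex_le ((shift ^^ n) x) a \<or> lex_le b ((shift ^^ n) x)" for n
      using K[of "Suc n"] a_head b_head
        lex_le_iff[of "(shift ^^ n) x" a] lex_le_iff[of b "(shift ^^ n) x"]
      by (cases "(shift ^^ n) x 0") simp_all
    with K show "x \<in> Fset a b"
      unfolding Fset_def by blast
  qed
qed

lemma Eset_Int_lex_interval_subset_Kset:
  "Eset a b \<inter> lex_interval (shift b) (shift a) \<subseteq> Kset (shift b) (shift a)"
proof
  fix x
  assume x: "x \<in> Eset a b \<inter> lex_interval (shift b) (shift a)"
  have "(shift ^^ n) x \<in> lex_interval (shift b) (shift a)" for n
  proof (induction n)
    case (Suc n)
    moreover have "lex_le ((shift ^^ n) x) a \<or> lex_le b ((shift ^^ n) x)"
      using x funpow_shift_mem_Eset Eset_lex_le_or_ge by blast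
    ultimately show ?case using shift_mem_lex_interval by simp
  qed (use x in simp)
  then show "x \<in> Kset (shift b) (shift a)"
    unfolding Kset_def lex_interval_def by blast
qed

lemma Eset_Int_lex_interval_eq_Fset:
  "Eset a b \<inter> lex_interval (shift b) (shift a) = Fset a b"
  using Eset_Int_lex_interval_subset_Kset Kset_subset_lex_interval Fset_subset_Eset Fset_eq_Kset
  by blast

lemma Eset_constant_prefix:
  assumes x: "x \<in> Eset a b"
  shows "(\<forall>i. x i = x 0)
    \<or> (\<exists>n. (\<forall>i<n. x i = x 0) \<and> (shift ^^ n) x \<in> Kset (shift b) (shift a))"
proof -
  have const: "x i = x 0" if "\<forall>j<n. x (Suc j) = x j" "i \<le> n" for i n
    using that by (induction i) auto
  show ?thesis
  proof (cases "\<exists>i. x (Suc i) \<noteq> x i")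
    case True
    define i where "i = (LEAST i. x (Suc i) \<noteq> x i)"
    have switch: "x (Suc i) \<noteq> x i" and before: "\<forall>j<i. x (Suc j) = x j"
      unfolding i_def using LeastI_ex[OF True] not_less_Least by auto
    have "\<forall>j<Suc i. x j = x 0"
      using const[OF before] less_Suc_eq_le by blast
    moreover have "(shift ^^ Suc i) x \<in> Kset (shift b) (shift a)"
    proof -
      let ?y = "(shift ^^ i) x"
      have "?y \<in> Eset a b" and "shift ?y \<in> Eset a b"
        using funpow_shift_mem_Eset[OF x, of i] funpow_shift_mem_Eset[OF x, of "Suc i"] by simp_all
      then have "lex_le ?y a \<or> lex_le b ?y" and "lex_le (shift ?y) a \<or> lex_le b (shift ?y)"
        by (simp_all add: Eset_lex_le_or_ge)
      moreover have "?y 0 \<noteq> shift ?y 0"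
        using switch by (simp add: funpow_shift_apply shift_apply)
      ultimately have "shift ?y \<in> lex_interval (shift b) (shift a)"
        by (rule shift_mem_lex_interval_if_switch)
      with \<open>shift ?y \<in> Eset a b\<close> show ?thesis
        using Eset_Int_lex_interval_subset_Kset by auto
    qed
    ultimately show ?thesis by blast
  next
    case False
    then show ?thesis using const[of _ i for i] by blast
  qed
qed

end

lemma finite_words: "finite (words n X)"
proof (rule finite_subset)
  show "words n X \<subseteq> {xs. set xs \<subseteq> UNIV \<and> length xs = n}"
    unfolding words_def by auto
qed (rule finite_lists_length_eq, simp)

lemma card_words_mono: "m \<le> n \<Longrightarrow> card (words m X) \<le> card (words n X)"
proof -
  assume "m \<le> n"
  then have "words m X = take m ` words n X"
    unfolding words_def image_image by (auto simp: take_map)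
  then show ?thesis
    using card_image_le finite_words by metis
qed

lemma words_subset_if_constant_prefix:
  assumes "\<And>y. y \<in> Y \<Longrightarrow>
    (\<forall>i. y i = y 0) \<or> (\<exists>n. (\<forall>i<n. y i = y 0) \<and> (shift ^^ n) y \<in> X)"
  shows "words N Y \<subseteq> range (\<lambda>c. replicate N c)
    \<union> (\<Union>n<N. \<Union>c. (\<lambda>w. replicate n c @ w) ` words (N - n) X)"
proof
  fix w
  assume "w \<in> words N Y"
  then obtain y where "y \<in> Y" and w: "w = map y [0..<N]"
    unfolding words_def by blast
  \<comment> \<open>naming \<open>y 0\<close> keeps the simplifier from looping on \<open>y i = y 0\<close>\<close>
  define c where "c = y 0"
  from assms[OF \<open>y \<in> Y\<close>] obtain n where
    n: "\<forall>i<n. y i = c" and tail: "n < N \<Longrightarrow> (shift ^^ n) y \<in> X"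
    unfolding c_def using less_irrefl by blast
  show "w \<in> range (\<lambda>c. replicate N c)
    \<union> (\<Union>n<N. \<Union>c. (\<lambda>w. replicate n c @ w) ` words (N - n) X)"
  proof (cases "n < N")
    case True
    have "w = replicate n c @ map ((shift ^^ n) y) [0..<N - n]"
      unfolding w using n True
      by (auto simp: list_eq_iff_nth_eq nth_append funpow_shift_apply)
    moreover have "map ((shift ^^ n) y) [0..<N - n] \<in> words (N - n) X"
      unfolding words_def using tail True by blast
    ultimately show ?thesis
      using True by blast
  next
    case False
    then have "w = replicate N c"
      unfolding w using n by (auto simp: list_eq_iff_nth_eq)
    then show ?thesis by blast
  qed
qed

lemma card_words_le_if_constant_prefix:
  assumes "\<And>y. y \<in> Y \<Longrightarrow>
    (\<forall>i. y i = y 0) \<or> (\<exists>n. (\<forall>i<n. y i = y 0) \<and> (shift ^^ n) y \<in> X)"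
  shows "card (words N Y) \<le> 2 + 2 * N * card (words N X)"
proof -
  let ?prefixed = "\<Union>n<N. \<Union>c. (\<lambda>w. replicate n c @ w) ` words (N - n) X"
  have "card (words N Y) \<le> card (range (\<lambda>c::bool. replicate N c) \<union> ?prefixed)"
    using words_subset_if_constant_prefix[OF assms]
    by (rule card_mono[rotated]) (auto intro: finite_words)
  also have "\<dots> \<le> card (range (\<lambda>c::bool. replicate N c)) + card ?prefixed"
    by (rule card_Un_le)
  also have "card (range (\<lambda>c::bool. replicate N c)) \<le> 2"
    using card_image_le[of "UNIV :: bool set" "\<lambda>c. replicate N c"] by simp
  also have "card ?prefixed
      \<le> (\<Sum>n<N. \<Sum>c\<in>UNIV. card ((\<lambda>w. replicate n c @ w) ` words (N - n) X))"
    by (intro order.trans[OF card_UN_le] sum_mono card_UN_le) simp_all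
  also have "\<dots> \<le> (\<Sum>n<N. \<Sum>c\<in>(UNIV :: bool set). card (words N X))"
    by (intro sum_mono order.trans[OF card_image_le[OF finite_words]] card_words_mono) simp
  also have "\<dots> = 2 * N * card (words N X)"
    by simp
  finally show ?thesis by simp
qed

lemma ln_of_nat_le_ln_add_ln:
  fixes u v c N :: nat
  assumes "v \<le> c + c * N * u"
  shows "ln (real v) \<le> ln (c + c * real N) + ln (real u)"
proof -
  have ln_c: "0 \<le> ln (c + c * real N)"
    by (cases "c = 0") (auto intro!: ln_ge_zero simp: add_increasing2)
  have ln_u: "0 \<le> ln (real u)"
    by (cases "u = 0") auto
  consider "v = 0" | "u = 0" "v \<noteq> 0" | "u \<noteq> 0" "v \<noteq> 0"
    by blast
  then show ?thesis
  proof cases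
    case 1
    with ln_c ln_u show ?thesis by simp
  next
    case 2
    with assms have "real v \<le> c + c * real N"
      by (simp add: add_increasing2)
    with 2 show ?thesis by (simp add: ln_mono)
  next
    case 3
    with assms have "c > 0" by (cases c) auto
    then have pos: "c + c * real N > 0" by (simp add: add_pos_nonneg)
    have "real v \<le> c + c * real N * real u"
      using assms by (metis of_nat_add of_nat_le_iff of_nat_mult)
    also have "\<dots> \<le> (c + c * real N) * real u"
      using mult_left_mono[of 1 "real u" "real c"] 3 by (simp add: algebra_simps)
    finally have "ln (real v) \<le> ln ((c + c * real N) * real u)"
      using 3 by (intro ln_mono) auto
    also have "\<dots> = ln (c + c * real N) + ln (real u)"
      using pos 3 by (simp add: ln_mult)
    finally show ?thesis .
  qed
qed

lemma lim_ln_div_eq_if_polynomially_close: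
  fixes u v :: "nat \<Rightarrow> nat" and c :: nat
  assumes le: "\<And>N. u N \<le> v N" and close: "\<And>N. v N \<le> c + c * N * u N"
  shows "lim (\<lambda>N. ln (real (u N)) / real N) = lim (\<lambda>N. ln (real (v N)) / real N)"
proof -
  have lower: "ln (real (u N)) \<le> ln (real (v N))" for N
    using le[of N] by (cases "u N = 0"; cases "v N = 0") (auto intro: ln_mono)
  have upper: "ln (real (v N)) - ln (real (u N)) \<le> ln (c + c * real N)" for N
    using ln_of_nat_le_ln_add_ln[OF close[of N]] by simp
  have "(\<lambda>N. ln (real (v N)) / real N - ln (real (u N)) / real N) \<longlonglongrightarrow> 0"
  proof (rule real_tendsto_sandwich[of "\<lambda>_. 0" _ _ "\<lambda>N. ln (c + c * real N) / real N"])
    show "\<forall>\<^sub>F N in sequentially. 0 \<le> ln (real (v N)) / real N - ln (real (u N)) / real N"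
      using lower by (intro always_eventually allI) (simp flip: diff_divide_distrib)
    show "\<forall>\<^sub>F N in sequentially.
        ln (real (v N)) / real N - ln (real (u N)) / real N \<le> ln (c + c * real N) / real N"
      using upper by (intro always_eventually allI) (simp flip: diff_divide_distrib add: divide_right_mono)
    show "(\<lambda>N. ln (c + c * real N) / real N) \<longlonglongrightarrow> 0"
    proof (cases "c = 0")
      case False
      then show ?thesis by real_asymp
    qed simp
  qed simp
  then show ?thesis
    unfolding lim_def using Lim_transform_eq by metis
qed

lemma htop_eq_if_card_words_close:
  assumes "X \<subseteq> Y" and "\<And>N. card (words N Y) \<le> c + c * N * card (words N X)"
  shows "htop X = htop Y"
proof -
  have "card (words N X) \<le> card (words N Y)" for N
    using assms(1) unfolding words_def by (intro card_mono finite_words[unfolded words_def]) auto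
  then show ?thesis
    unfolding htop_def using assms(2) by (rule lim_ln_div_eq_if_polynomially_close)
qed

theorem mainTheorem6:
  fixes a b :: seq
  assumes "\<not> a 0" and "b 0"
  shows "Fset a b = Kset (shift b) (shift a)
    \<and> (Eset a b \<inter> lex_interval (shift b) (shift a) = Fset a b
         \<and> Fset a b = Kset (shift b) (shift a))
    \<and> htop (Kset (shift b) (shift a)) = htop (Eset a b)"
proof -
  have F: "Fset a b = Kset (shift b) (shift a)"
    using assms by (rule Fset_eq_Kset)
  moreover have "Eset a b \<inter> lex_interval (shift b) (shift a) = Fset a b"
    using assms by (rule Eset_Int_lex_interval_eq_Fset)
  moreover have "htop (Kset (shift b) (shift a)) = htop (Eset a b)"
  proof (rule htop_eq_if_card_words_close)
    show "Kset (shift b) (shift a) \<subseteq> Eset a b"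
      using Fset_subset_Eset F by blast
    show "card (words N (Eset a b)) \<le> 2 + 2 * N * card (words N (Kset (shift b) (shift a)))" for N
      using Eset_constant_prefix[of a b, OF assms] by (rule card_words_le_if_constant_prefix)
  qed
  ultimately show ?thesis by blast
qed

end
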